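(* Let $\mathcal X$ be a finite abelian group, $\mathcal Z$ and $\mathcal M$ finite sets, $P_{XZ}$ a distribution on $\mathcal X\times\mathcal Z$ with marginal $P_Z$, $P_M$ a distribution on $\mathcal M$, $W_{XZ|X}(x,z|x'):=P_{XZ}(x-x',z)$, and $Q_Z$ a distribution on $\mathcal Z$ with $Q_Z(z)>0$ whenever $P_Z(z)>0$. Put $R:=\log|\mathcal X|$ and, for $\theta\in\mathbb R$, \[U(\theta):=\log\sum_{m:P_M(m)>0}P_M(m)^{1-\theta}+\log\sum_{(x,z):P_{XZ}(x,z)>0}P_{XZ}(x,z)^{1-\theta}Q_Z(z)^{\theta}.\] Then for every code $\phi$, \[ \log P_{js}[\phi|P_M,W_{XZ|X}]\ge\sup_{s>0,\ \rho\in\mathbb R,\ \sigma\ge0}\frac{1+s}{s}\Big[-\frac{U(\rho(1+s))}{1+s}+U(\rho)+\log\Big(1-2e^{\frac{U(\rho-\sigma(1-\rho))-(1+\sigma)U(\rho)+\sigma R}{1+\sigma}}\Big)\Big]. \] Moreover, if $\theta_0<1$ satisfies $(1-\theta_0)U'(\theta_0)+U(\theta_0)=R$, then \[ \log P_{js}[\phi|P_M,W_{XZ|X}]\ge\sup_{s>0,\ \theta_0<\rho<1}\frac{1+s}{s}\Big[-\frac{U(\rho(1+s))}{1+s}+U(\rho)+\log\Big(1-2e^{(\rho-\theta_0)U'(\theta_0)+U(\theta_0)-U(\rho)}\Big)\Big]. \]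
   Context: A code $\phi=(\mathsf e,\mathsf d)$ consists of $\mathsf e:\mathcal M\to\mathcal X$ and $\mathsf d:\mathcal X\times\mathcal Z\to\mathcal M$; $P_{js}[\phi|P_M,W]:=\sum_mP_M(m)W(\{y:\mathsf d(y)\ne m\}|\mathsf e(m))$. Convention: $\log t:=-\infty$ for $t\le 0$. Equivalently $U(\theta)=\theta H_{1-\theta}(M)+\theta H_{1-\theta}(P_{XZ}|Q_Z)$ with $H_{1-\theta}(M)=\frac1\theta\log\sum_mP_M(m)^{1-\theta}$ and $H_{1-\theta}(P_{XZ}|Q_Z)=\frac1\theta\log\sum P_{XZ}^{1-\theta}Q_Z^\theta$. *)

theory Defs
  imports "HOL-Analysis.Analysis"
begin

definition elog :: "real \<Rightarrow> ereal" where
  "elog t = (if t > 0 then ereal (ln t) else -\<infinity>)"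

definition Wch :: "('x::ab_group_add \<times> 'z \<Rightarrow> real) \<Rightarrow> 'x \<times> 'z \<Rightarrow> 'x \<Rightarrow> real" where
  "Wch PXZ y x' = PXZ (fst y - x', snd y)"

definition Pjs :: "('m::finite \<Rightarrow> real) \<Rightarrow> ('y::finite \<Rightarrow> 'x \<Rightarrow> real)
                   \<Rightarrow> ('m \<Rightarrow> 'x) \<Rightarrow> ('y \<Rightarrow> 'm) \<Rightarrow> real" where
  "Pjs PM W e d = (\<Sum>m\<in>UNIV. PM m * (\<Sum>y\<in>{y. d y \<noteq> m}. W y (e m)))"

definition Ufun :: "('m::finite \<Rightarrow> real) \<Rightarrow> ('x::finite \<times> 'z::finite \<Rightarrow> real)
                    \<Rightarrow> ('z \<Rightarrow> real) \<Rightarrow> real \<Rightarrow> real" where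
  "Ufun PM PXZ QZ \<theta> =
     ln (\<Sum>m\<in>{m. PM m > 0}. PM m powr (1 - \<theta>))
   + ln (\<Sum>xz\<in>{xz. PXZ xz > 0}. PXZ xz powr (1 - \<theta>) * QZ (snd xz) powr \<theta>)"

end

theory Submission
  imports Defs
begin

text \<open>Put \<open>P(m,x,z) = P_M(m) P_XZ(x,z)\<close> (message and noise) and \<open>Q(m,x,z) = Q_Z(z)\<close>.
  Then \<open>U(\<theta>) = log \<Sum> P^(1-\<theta>) Q^\<theta>\<close>, the error probability is the \<open>P\<close>-mass of the set where
  decoding fails, and by translation invariance of the channel the set where decoding succeeds
  has \<open>Q\<close>-mass \<open>|X|\<close>. For the tilted law \<open>T \<propto> P^(1-\<rho>) Q^\<rho>\<close>, the pointwise estimate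
  \<open>t \<le> u + t^(1+\<sigma>) u^(-\<sigma>)\<close> with \<open>u = c Q / |X|\<close> bounds the tilted mass of the success set by
  \<open>2c\<close> for the right constant \<open>c\<close>; so the failure set has tilted mass at least \<open>1 - 2c\<close>.
  Hoelder's inequality with exponents \<open>(1+s)/s\<close> and \<open>1+s\<close> bounds that tilted mass by
  \<open>P(failure)^(s/(1+s)) exp (U(\<rho>(1+s))/(1+s) - U(\<rho>))\<close>, and taking logarithms gives the
  first bound. The second one is the first with \<open>\<sigma> = (\<rho> - \<theta>\<^sub>0)/(1 - \<rho>)\<close>.\<close>

lemma Hoelder_inequality_sum:
  fixes a b :: "'i \<Rightarrow> real"
  assumes "finite A" and a_nonneg: "\<And>i. i \<in> A \<Longrightarrow> a i \<ge> 0" and b_nonneg: "\<And>i. i \<in> A \<Longrightarrow> b i \<ge> 0"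
    and "\<alpha> > 0" "\<beta> > 0" "\<alpha> + \<beta> = 1"
  shows "(\<Sum>i\<in>A. a i powr \<alpha> * b i powr \<beta>) \<le> (\<Sum>i\<in>A. a i) powr \<alpha> * (\<Sum>i\<in>A. b i) powr \<beta>"
proof -
  define SA SB where "SA = (\<Sum>i\<in>A. a i)" and "SB = (\<Sum>i\<in>A. b i)"
  show ?thesis
  proof (cases "SA = 0 \<or> SB = 0")
    case True
    then have "\<forall>i\<in>A. a i powr \<alpha> * b i powr \<beta> = 0"
      using sum_nonneg_eq_0_iff[OF \<open>finite A\<close>] a_nonneg b_nonneg unfolding SA_def SB_def by auto
    then have "(\<Sum>i\<in>A. a i powr \<alpha> * b i powr \<beta>) = 0" by (intro sum.neutral) auto
    then show ?thesis by simp
  next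
    case False
    then have "SA > 0" "SB > 0"
      using a_nonneg b_nonneg unfolding SA_def SB_def by (metis less_eq_real_def sum_nonneg)+
    have Young: "a i powr \<alpha> * b i powr \<beta> \<le> SA powr \<alpha> * SB powr \<beta> * (\<alpha> * (a i / SA) + \<beta> * (b i / SB))"
      if "i \<in> A" for i
    proof (cases "a i = 0 \<or> b i = 0")
      case True
      then show ?thesis using \<open>SA > 0\<close> \<open>SB > 0\<close> assms that by auto
    next
      case False
      then have "a i > 0" "b i > 0" using a_nonneg b_nonneg that by (auto simp: less_le)
      then have "(a i / SA) powr \<alpha> * (b i / SB) powr \<beta> \<le> \<alpha> * (a i / SA) + \<beta> * (b i / SB)"
        using Youngs_inequality_0[of \<alpha> \<beta> "a i / SA" "b i / SB"] assms \<open>SA > 0\<close> \<open>SB > 0\<close> by simp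
      then show ?thesis
        using \<open>SA > 0\<close> \<open>SB > 0\<close> \<open>a i > 0\<close> \<open>b i > 0\<close>
        by (simp add: powr_divide mult_left_mono[where c = "SA powr \<alpha> * SB powr \<beta>", simplified] field_simps)
    qed
    have "(\<Sum>i\<in>A. a i powr \<alpha> * b i powr \<beta>)
        \<le> (\<Sum>i\<in>A. SA powr \<alpha> * SB powr \<beta> * (\<alpha> * (a i / SA) + \<beta> * (b i / SB)))"
      by (rule sum_mono) (rule Young)
    also have "\<dots> = SA powr \<alpha> * SB powr \<beta> * (\<alpha> * ((\<Sum>i\<in>A. a i) / SA) + \<beta> * ((\<Sum>i\<in>A. b i) / SB))"
      by (simp add: sum_distrib_left sum.distrib sum_divide_distrib[symmetric] algebra_simps)
    also have "\<dots> = SA powr \<alpha> * SB powr \<beta>"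
      using \<open>SA > 0\<close> \<open>SB > 0\<close> \<open>\<alpha> + \<beta> = 1\<close> by (simp flip: SA_def SB_def)
    finally show ?thesis unfolding SA_def SB_def .
  qed
qed

lemma le_add_powr_threshold:
  fixes t u \<sigma> :: real
  assumes "t \<ge> 0" "u \<ge> 0" "\<sigma> \<ge> 0" "t > 0 \<Longrightarrow> u > 0"
  shows "t \<le> u + t powr (1 + \<sigma>) * u powr (- \<sigma>)"
proof (cases "t \<le> u")
  case True
  then show ?thesis by (simp add: add_increasing2)
next
  case False
  with assms have "t > 0" "u > 0" by auto
  have "t \<le> t * (t / u) powr \<sigma>"
    using False \<open>u > 0\<close> \<open>\<sigma> \<ge> 0\<close> by (simp add: ge_one_powr_ge_zero)
  also have "\<dots> = t powr (1 + \<sigma>) * u powr (- \<sigma>)"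
    using \<open>t > 0\<close> \<open>u > 0\<close> by (simp add: powr_divide powr_add powr_minus_divide)
  finally show ?thesis using \<open>u > 0\<close> by simp
qed

definition renyi_sum :: "('w::finite \<Rightarrow> real) \<Rightarrow> ('w \<Rightarrow> real) \<Rightarrow> real \<Rightarrow> real" where
  "renyi_sum P Q \<theta> = (\<Sum>w\<in>UNIV. P w powr (1 - \<theta>) * Q w powr \<theta>)"

locale dominated_weights =
  fixes P Q :: "'w::finite \<Rightarrow> real"
  assumes P_nonneg: "\<And>w. P w \<ge> 0" and Q_nonneg: "\<And>w. Q w \<ge> 0"
    and dominated: "\<And>w. P w > 0 \<Longrightarrow> Q w > 0"
    and P_nonzero: "\<exists>w. P w > 0"
begin

lemma renyi_sum_pos: "renyi_sum P Q \<theta> > 0"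
proof -
  obtain w where "P w > 0" using P_nonzero ..
  then show ?thesis
    unfolding renyi_sum_def using dominated[of w] P_nonneg Q_nonneg
    by (intro sum_pos2[where i = w]) auto
qed

definition tilted :: "real \<Rightarrow> 'w \<Rightarrow> real" where
  "tilted \<rho> w = P w powr (1 - \<rho>) * Q w powr \<rho> / renyi_sum P Q \<rho>"

lemma tilted_nonneg: "tilted \<rho> w \<ge> 0"
  using renyi_sum_pos[of \<rho>] by (simp add: tilted_def)

lemma sum_tilted: "(\<Sum>w\<in>UNIV. tilted \<rho> w) = 1"
  using renyi_sum_pos[of \<rho>] by (simp add: tilted_def renyi_sum_def flip: sum_divide_distrib)

lemma tilted_pos_imp_Q_pos: "tilted \<rho> w > 0 \<Longrightarrow> Q w > 0"
  using dominated P_nonneg[of w] by (cases "P w = 0") (auto simp: tilted_def)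

lemma tilted_powr_mult_Q_powr:
  "tilted \<rho> w powr (1 + \<sigma>) * Q w powr (- \<sigma>)
     = P w powr (1 - (\<rho> - \<sigma> * (1 - \<rho>))) * Q w powr (\<rho> - \<sigma> * (1 - \<rho>))
       / renyi_sum P Q \<rho> powr (1 + \<sigma>)"
proof (cases "P w > 0")
  case False
  then show ?thesis using P_nonneg[of w] by (simp add: tilted_def)
next
  case True
  have "tilted \<rho> w powr (1 + \<sigma>)
      = P w powr ((1 - \<rho>) * (1 + \<sigma>)) * Q w powr (\<rho> * (1 + \<sigma>)) / renyi_sum P Q \<rho> powr (1 + \<sigma>)"
    using True dominated[OF True] renyi_sum_pos[of \<rho>]
    by (simp add: tilted_def powr_divide powr_mult powr_powr)
  then have "tilted \<rho> w powr (1 + \<sigma>) * Q w powr (- \<sigma>)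
      = P w powr ((1 - \<rho>) * (1 + \<sigma>)) * Q w powr (\<rho> * (1 + \<sigma>) - \<sigma>) / renyi_sum P Q \<rho> powr (1 + \<sigma>)"
    by (simp add: powr_add[symmetric])
  moreover have "(1 - \<rho>) * (1 + \<sigma>) = 1 - (\<rho> - \<sigma> * (1 - \<rho>))" "\<rho> * (1 + \<sigma>) - \<sigma> = \<rho> - \<sigma> * (1 - \<rho>)"
    by algebra+
  ultimately show ?thesis by simp
qed

lemma sum_tilted_powr_mult_Q_powr:
  assumes "N > 0"
  shows "(\<Sum>w\<in>UNIV. tilted \<rho> w powr (1 + \<sigma>) * (Q w / N) powr (- \<sigma>))
    = exp (ln (renyi_sum P Q (\<rho> - \<sigma> * (1 - \<rho>))) - (1 + \<sigma>) * ln (renyi_sum P Q \<rho>) + \<sigma> * ln N)"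
proof -
  have "(Q w / N) powr (- \<sigma>) = N powr \<sigma> * Q w powr (- \<sigma>)" for w
    using assms Q_nonneg[of w] by (subst powr_divide) (auto simp: powr_minus_divide)
  then have "(\<Sum>w\<in>UNIV. tilted \<rho> w powr (1 + \<sigma>) * (Q w / N) powr (- \<sigma>))
      = N powr \<sigma> * renyi_sum P Q (\<rho> - \<sigma> * (1 - \<rho>)) / renyi_sum P Q \<rho> powr (1 + \<sigma>)"
    by (simp add: mult.left_commute[of _ "N powr \<sigma>"] tilted_powr_mult_Q_powr renyi_sum_def
        sum_distrib_left sum_divide_distrib)
  also have "\<dots> = exp (ln (renyi_sum P Q (\<rho> - \<sigma> * (1 - \<rho>))) - (1 + \<sigma>) * ln (renyi_sum P Q \<rho>) + \<sigma> * ln N)"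
    using assms renyi_sum_pos[of \<rho>] renyi_sum_pos[of "\<rho> - \<sigma> * (1 - \<rho>)"]
    by (simp add: exp_add exp_diff powr_def mult.commute)
  finally show ?thesis .
qed

lemma tilted_mass_le:
  assumes "(\<Sum>w\<in>A. Q w) \<le> N" "N > 0" "\<sigma> \<ge> 0"
  shows "(\<Sum>w\<in>A. tilted \<rho> w)
    \<le> 2 * exp ((ln (renyi_sum P Q (\<rho> - \<sigma> * (1 - \<rho>))) - (1 + \<sigma>) * ln (renyi_sum P Q \<rho>) + \<sigma> * ln N)
               / (1 + \<sigma>))"
proof -
  define c where "c = exp ((ln (renyi_sum P Q (\<rho> - \<sigma> * (1 - \<rho>))) - (1 + \<sigma>) * ln (renyi_sum P Q \<rho>)
    + \<sigma> * ln N) / (1 + \<sigma>))"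
  define K where "K = (\<Sum>w\<in>UNIV. tilted \<rho> w powr (1 + \<sigma>) * (Q w / N) powr (- \<sigma>))"
  have "c > 0" by (simp add: c_def)
  have K: "K = c powr (1 + \<sigma>)"
    unfolding K_def c_def sum_tilted_powr_mult_Q_powr[OF \<open>N > 0\<close>] using \<open>\<sigma> \<ge> 0\<close>
    by (subst powr_def) simp
  have "(\<Sum>w\<in>A. tilted \<rho> w)
      \<le> (\<Sum>w\<in>A. c * (Q w / N) + tilted \<rho> w powr (1 + \<sigma>) * (c * (Q w / N)) powr (- \<sigma>))"
    using assms \<open>c > 0\<close> Q_nonneg tilted_nonneg tilted_pos_imp_Q_pos
    by (intro sum_mono le_add_powr_threshold) auto
  also have "\<dots> = c * ((\<Sum>w\<in>A. Q w) / N)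
      + c powr (- \<sigma>) * (\<Sum>w\<in>A. tilted \<rho> w powr (1 + \<sigma>) * (Q w / N) powr (- \<sigma>))"
    using assms \<open>c > 0\<close> Q_nonneg
    by (simp add: powr_mult[of c] sum.distrib sum_distrib_left sum_divide_distrib mult_ac
        del: times_divide_eq_right)
  also have "\<dots> \<le> c * 1 + c powr (- \<sigma>) * K"
  proof (intro add_mono mult_left_mono)
    show "(\<Sum>w\<in>A. Q w) / N \<le> 1" using assms by simp
    show "(\<Sum>w\<in>A. tilted \<rho> w powr (1 + \<sigma>) * (Q w / N) powr (- \<sigma>)) \<le> K"
      unfolding K_def by (rule sum_mono2) auto
  qed (use \<open>c > 0\<close> in auto)
  also have "\<dots> = 2 * c"
    using \<open>c > 0\<close> by (simp add: K flip: powr_add)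
  finally show ?thesis unfolding c_def .
qed

lemma tilted_mass_le_Hoelder:
  assumes "s > 0"
  shows "(\<Sum>w\<in>B. tilted \<rho> w)
    \<le> (\<Sum>w\<in>B. P w) powr (s / (1 + s)) * renyi_sum P Q (\<rho> * (1 + s)) powr (1 / (1 + s))
       / renyi_sum P Q \<rho>"
proof -
  define b where "b w = P w powr (1 - \<rho> * (1 + s)) * Q w powr (\<rho> * (1 + s))" for w
  have split: "P w powr (1 - \<rho>) * Q w powr \<rho> = P w powr (s / (1 + s)) * b w powr (1 / (1 + s))" for w
  proof (cases "P w > 0")
    case False
    then show ?thesis using P_nonneg[of w] \<open>s > 0\<close> by simp
  next
    case True
    have "P w powr (s / (1 + s)) * b w powr (1 / (1 + s))
        = P w powr (s / (1 + s) + (1 - \<rho> * (1 + s)) / (1 + s)) * Q w powr (\<rho> * (1 + s) / (1 + s))"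
      using True dominated[OF True] by (simp add: b_def powr_mult powr_powr powr_add)
    moreover have "s / (1 + s) + (1 - \<rho> * (1 + s)) / (1 + s) = 1 - \<rho>"
      using \<open>s > 0\<close> by (simp add: add_divide_distrib[symmetric] diff_divide_distrib)
    ultimately show ?thesis using \<open>s > 0\<close> by simp
  qed
  have "(\<Sum>w\<in>B. tilted \<rho> w)
      = (\<Sum>w\<in>B. P w powr (s / (1 + s)) * b w powr (1 / (1 + s))) / renyi_sum P Q \<rho>"
    by (simp add: tilted_def split sum_divide_distrib)
  also have "\<dots> \<le> (\<Sum>w\<in>B. P w) powr (s / (1 + s)) * (\<Sum>w\<in>B. b w) powr (1 / (1 + s)) / renyi_sum P Q \<rho>"
    using renyi_sum_pos[of \<rho>] P_nonneg Q_nonneg \<open>s > 0\<close>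
    by (intro divide_right_mono Hoelder_inequality_sum) (auto simp: b_def field_simps)
  also have "\<dots> \<le> (\<Sum>w\<in>B. P w) powr (s / (1 + s)) * renyi_sum P Q (\<rho> * (1 + s)) powr (1 / (1 + s))
      / renyi_sum P Q \<rho>"
    using renyi_sum_pos[of \<rho>] P_nonneg Q_nonneg \<open>s > 0\<close>
    by (intro divide_right_mono mult_left_mono powr_mono2)
      (auto simp: b_def renyi_sum_def intro!: sum_nonneg sum_mono2)
  finally show ?thesis .
qed

lemma elog_compl_mass_ge:
  assumes "(\<Sum>w\<in>A. Q w) \<le> N" "N > 0" "s > 0" "\<sigma> \<ge> 0"
  shows "ereal ((1 + s) / s) *
      (ereal (- ln (renyi_sum P Q (\<rho> * (1 + s))) / (1 + s) + ln (renyi_sum P Q \<rho>))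
       + elog (1 - 2 * exp ((ln (renyi_sum P Q (\<rho> - \<sigma> * (1 - \<rho>))) - (1 + \<sigma>) * ln (renyi_sum P Q \<rho>)
                              + \<sigma> * ln N) / (1 + \<sigma>))))
    \<le> elog (\<Sum>w\<in>-A. P w)"
proof (cases "1 - 2 * exp ((ln (renyi_sum P Q (\<rho> - \<sigma> * (1 - \<rho>))) - (1 + \<sigma>) * ln (renyi_sum P Q \<rho>)
                              + \<sigma> * ln N) / (1 + \<sigma>)) > 0")
  case False
  then show ?thesis using \<open>s > 0\<close> by (simp add: elog_def)
next
  case True
  define L where "L = 1 - 2 * exp ((ln (renyi_sum P Q (\<rho> - \<sigma> * (1 - \<rho>)))
    - (1 + \<sigma>) * ln (renyi_sum P Q \<rho>) + \<sigma> * ln N) / (1 + \<sigma>))"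
  define S0 S1 PA where "S0 = renyi_sum P Q \<rho>" and "S1 = renyi_sum P Q (\<rho> * (1 + s))"
    and "PA = (\<Sum>w\<in>-A. P w)"
  have "L > 0" using True by (simp add: L_def)
  have "S0 > 0" "S1 > 0" by (simp_all add: S0_def S1_def renyi_sum_pos)
  have "L \<le> (\<Sum>w\<in>-A. tilted \<rho> w)"
    using tilted_mass_le[OF assms(1,2,4), of \<rho>] sum.union_disjoint[of A "-A" "tilted \<rho>"]
    by (simp add: L_def sum_tilted flip: Compl_eq_Diff_UNIV)
  also have "\<dots> \<le> PA powr (s / (1 + s)) * S1 powr (1 / (1 + s)) / S0"
    unfolding PA_def S0_def S1_def by (rule tilted_mass_le_Hoelder[OF \<open>s > 0\<close>])
  finally have L_le: "L \<le> PA powr (s / (1 + s)) * S1 powr (1 / (1 + s)) / S0" .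
  have "PA > 0"
  proof (rule ccontr)
    assume "\<not> PA > 0"
    then have "PA = 0" using P_nonneg by (metis PA_def less_eq_real_def sum_nonneg)
    then show False using L_le \<open>L > 0\<close> by simp
  qed
  have "ln L \<le> s / (1 + s) * ln PA + ln S1 / (1 + s) - ln S0"
    using ln_mono[OF L_le \<open>L > 0\<close>] \<open>PA > 0\<close> \<open>S0 > 0\<close> \<open>S1 > 0\<close> \<open>L > 0\<close>
    by (simp add: ln_div ln_mult ln_powr)
  then have "- ln S1 / (1 + s) + ln S0 + ln L \<le> s / (1 + s) * ln PA"
    by (subst minus_divide_left[symmetric]) linarith
  then have "(1 + s) / s * (- ln S1 / (1 + s) + ln S0 + ln L) \<le> (1 + s) / s * (s / (1 + s) * ln PA)"
    using \<open>s > 0\<close> by (intro mult_left_mono) auto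
  then have "(1 + s) / s * (- ln S1 / (1 + s) + ln S0 + ln L) \<le> ln PA"
    using \<open>s > 0\<close> by simp
  then show ?thesis
    unfolding L_def[symmetric] unfolding S0_def[symmetric] S1_def[symmetric] PA_def[symmetric]
    using \<open>L > 0\<close> \<open>PA > 0\<close> by (simp add: elog_def)
qed

lemma Sup_error_exponent_le:
  assumes "\<And>\<theta>. U \<theta> = ln (renyi_sum P Q \<theta>)" "R = ln N" "(\<Sum>w\<in>A. Q w) \<le> N" "N > 0"
  shows "Sup {ereal ((1 + s) / s) *
              (ereal (- U (\<rho> * (1 + s)) / (1 + s) + U \<rho>)
               + elog (1 - 2 * exp ((U (\<rho> - \<sigma> * (1 - \<rho>)) - (1 + \<sigma>) * U \<rho> + \<sigma> * R)
                                    / (1 + \<sigma>))))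
             | s \<rho> \<sigma>. s > 0 \<and> \<sigma> \<ge> 0} \<le> elog (\<Sum>w\<in>-A. P w)"
  using elog_compl_mass_ge[OF assms(3,4)] by (auto simp: assms(1,2) intro!: Sup_least)

end

lemma Sup_error_exponent_reparametrised_le:
  fixes U :: "real \<Rightarrow> real"
  assumes "\<theta>0 < 1" "(1 - \<theta>0) * D + U \<theta>0 = R"
  shows "Sup {ereal ((1 + s) / s) *
              (ereal (- U (\<rho> * (1 + s)) / (1 + s) + U \<rho>)
               + elog (1 - 2 * exp ((\<rho> - \<theta>0) * D + U \<theta>0 - U \<rho>)))
             | s \<rho>. s > 0 \<and> \<theta>0 < \<rho> \<and> \<rho> < 1}
    \<le> Sup {ereal ((1 + s) / s) *
              (ereal (- U (\<rho> * (1 + s)) / (1 + s) + U \<rho>)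
               + elog (1 - 2 * exp ((U (\<rho> - \<sigma> * (1 - \<rho>)) - (1 + \<sigma>) * U \<rho> + \<sigma> * R)
                                    / (1 + \<sigma>))))
             | s \<rho> \<sigma>. s > 0 \<and> \<sigma> \<ge> 0}"
proof (rule Sup_subset_mono, safe)
  fix s \<rho> :: real
  assume "s > 0" "\<theta>0 < \<rho>" "\<rho> < 1"
  define \<sigma> where "\<sigma> = (\<rho> - \<theta>0) / (1 - \<rho>)"
  have "\<sigma> \<ge> 0" "\<rho> - \<sigma> * (1 - \<rho>) = \<theta>0"
    using \<open>\<theta>0 < \<rho>\<close> \<open>\<rho> < 1\<close> by (simp_all add: \<sigma>_def)
  moreover have "(U \<theta>0 - (1 + \<sigma>) * U \<rho> + \<sigma> * R) / (1 + \<sigma>) = (\<rho> - \<theta>0) * D + U \<theta>0 - U \<rho>"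
  proof -
    have "\<sigma> * (1 - \<theta>0) = (1 + \<sigma>) * (\<rho> - \<theta>0)"
      using \<open>\<rho> < 1\<close> by (simp add: \<sigma>_def field_simps)
    then have "\<sigma> * R = (1 + \<sigma>) * (\<rho> - \<theta>0) * D + \<sigma> * U \<theta>0"
      unfolding assms(2)[symmetric] by (simp add: distrib_left mult.assoc[symmetric])
    then have "U \<theta>0 - (1 + \<sigma>) * U \<rho> + \<sigma> * R = (1 + \<sigma>) * ((\<rho> - \<theta>0) * D + U \<theta>0 - U \<rho>)"
      by (simp add: algebra_simps)
    then show ?thesis using \<open>\<sigma> \<ge> 0\<close> by simp
  qed
  ultimately show "\<exists>s' \<rho>' \<sigma>'. ereal ((1 + s) / s) *
              (ereal (- U (\<rho> * (1 + s)) / (1 + s) + U \<rho>)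
               + elog (1 - 2 * exp ((\<rho> - \<theta>0) * D + U \<theta>0 - U \<rho>)))
    = ereal ((1 + s') / s') *
              (ereal (- U (\<rho>' * (1 + s')) / (1 + s') + U \<rho>')
               + elog (1 - 2 * exp ((U (\<rho>' - \<sigma>' * (1 - \<rho>')) - (1 + \<sigma>') * U \<rho>' + \<sigma>' * R)
                                    / (1 + \<sigma>'))))
    \<and> s' > 0 \<and> \<sigma>' \<ge> 0"
    using \<open>s > 0\<close> by (intro exI[of _ s] exI[of _ \<rho>] exI[of _ \<sigma>]) simp
qed

definition decoded_correctly :: "('m \<Rightarrow> 'x::plus) \<Rightarrow> ('x \<times> 'z \<Rightarrow> 'm) \<Rightarrow> ('m \<times> 'x \<times> 'z) set" where
  "decoded_correctly e d = {(m, x, z). d (e m + x, z) = m}"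

lemma sum_translate_fst:
  fixes g :: "'x::{group_add, finite} \<times> 'z::finite \<Rightarrow> 'a::comm_monoid_add"
  shows "(\<Sum>xz\<in>UNIV. g (a + fst xz, snd xz)) = (\<Sum>y\<in>UNIV. g y)"
  by (rule sum.reindex_bij_witness[where i = "\<lambda>y. (- a + fst y, snd y)" and j = "\<lambda>xz. (a + fst xz, snd xz)"])
    (auto simp: add.assoc[symmetric])

lemma Pjs_Wch_eq_sum_compl:
  fixes PXZ :: "'x::{ab_group_add, finite} \<times> 'z::finite \<Rightarrow> real" and PM :: "'m::finite \<Rightarrow> real"
  shows "Pjs PM (Wch PXZ) e d = (\<Sum>(m, xz)\<in>-decoded_correctly e d. PM m * PXZ xz)"
proof -
  have "Pjs PM (Wch PXZ) e d = (\<Sum>m\<in>UNIV. \<Sum>y\<in>UNIV. if d y \<noteq> m then PM m * PXZ (fst y - e m, snd y) else 0)"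
    unfolding Pjs_def Wch_def by (simp add: sum_distrib_left sum.If_cases Int_def)
  also have "\<dots> = (\<Sum>m\<in>UNIV. \<Sum>xz\<in>UNIV. if d (e m + fst xz, snd xz) \<noteq> m then PM m * PXZ xz else 0)"
  proof (rule sum.cong[OF refl])
    fix m
    show "(\<Sum>y\<in>UNIV. if d y \<noteq> m then PM m * PXZ (fst y - e m, snd y) else 0)
        = (\<Sum>xz\<in>UNIV. if d (e m + fst xz, snd xz) \<noteq> m then PM m * PXZ xz else 0)"
      by (subst sum_translate_fst[symmetric, where a = "e m"]) (auto intro: sum.cong)
  qed
  also have "\<dots> = (\<Sum>(m, xz)\<in>UNIV. if (m, xz) \<notin> decoded_correctly e d then PM m * PXZ xz else 0)"
    by (simp add: decoded_correctly_def sum.cartesian_product case_prod_unfold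
        flip: UNIV_Times_UNIV)
  also have "\<dots> = (\<Sum>(m, xz)\<in>-decoded_correctly e d. PM m * PXZ xz)"
    by (simp add: sum.If_cases Collect_neg_eq case_prod_unfold)
  finally show ?thesis .
qed

lemma sum_decoded_correctly:
  fixes QZ :: "'z::finite \<Rightarrow> real" and e :: "'m::finite \<Rightarrow> 'x::{group_add, finite}"
  shows "(\<Sum>(m, xz)\<in>decoded_correctly e d. QZ (snd xz)) = real CARD('x) * (\<Sum>z\<in>UNIV. QZ z)"
proof -
  have "(\<Sum>(m, xz)\<in>decoded_correctly e d. QZ (snd xz))
      = (\<Sum>(m, xz)\<in>UNIV. if (m, xz) \<in> decoded_correctly e d then QZ (snd xz) else 0)"
    by (simp add: sum.If_cases case_prod_unfold)
  also have "\<dots> = (\<Sum>m\<in>UNIV. \<Sum>xz\<in>UNIV. if d (e m + fst xz, snd xz) = m then QZ (snd xz) else 0)"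
    by (simp add: decoded_correctly_def sum.cartesian_product case_prod_unfold
        flip: UNIV_Times_UNIV)
  also have "\<dots> = (\<Sum>m\<in>UNIV. \<Sum>y\<in>UNIV. if d y = m then QZ (snd y) else 0)"
  proof (rule sum.cong[OF refl])
    fix m
    show "(\<Sum>xz\<in>UNIV. if d (e m + fst xz, snd xz) = m then QZ (snd xz) else 0)
        = (\<Sum>y\<in>UNIV. if d y = m then QZ (snd y) else 0)"
      by (subst sum_translate_fst[symmetric, where a = "e m"]) (auto intro: sum.cong)
  qed
  also have "\<dots> = (\<Sum>y::'x \<times> 'z\<in>UNIV. QZ (snd y))"
    by (subst sum.swap) (simp add: eq_commute[of "d _"])
  also have "\<dots> = (\<Sum>x::'x\<in>UNIV. \<Sum>z\<in>UNIV. QZ z)"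
    by (simp only: sum.cartesian_product UNIV_Times_UNIV) (simp add: case_prod_beta)
  finally show ?thesis by simp
qed

text \<open>Since \<open>0 powr a = 0\<close>, summing over the support (as \<open>Ufun\<close> does) or over everything
  makes no difference.\<close>

lemma Ufun_eq_ln_renyi_sum:
  fixes PXZ :: "'x::finite \<times> 'z::finite \<Rightarrow> real" and PM :: "'m::finite \<Rightarrow> real"
  assumes PM_nonneg: "\<And>m. PM m \<ge> 0" and PXZ_nonneg: "\<And>xz. PXZ xz \<ge> 0" and "\<And>z. QZ z \<ge> 0"
    and "PM m0 > 0" "PXZ xz0 > 0" "QZ (snd xz0) > 0"
  shows "Ufun PM PXZ QZ \<theta> = ln (renyi_sum (\<lambda>(m, xz). PM m * PXZ xz) (\<lambda>(m, xz). QZ (snd xz)) \<theta>)"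
proof -
  define SM SXZ where "SM = (\<Sum>m\<in>UNIV. PM m powr (1 - \<theta>))"
    and "SXZ = (\<Sum>xz\<in>UNIV. PXZ xz powr (1 - \<theta>) * QZ (snd xz) powr \<theta>)"
  have "(\<Sum>m\<in>{m. PM m > 0}. PM m powr (1 - \<theta>)) = SM"
    unfolding SM_def by (rule sum.mono_neutral_left) (use PM_nonneg in \<open>auto simp: not_less order.antisym\<close>)
  moreover have "(\<Sum>xz\<in>{xz. PXZ xz > 0}. PXZ xz powr (1 - \<theta>) * QZ (snd xz) powr \<theta>) = SXZ"
    unfolding SXZ_def by (rule sum.mono_neutral_left) (use PXZ_nonneg in \<open>auto simp: not_less order.antisym\<close>)
  moreover have "renyi_sum (\<lambda>(m, xz). PM m * PXZ xz) (\<lambda>(m, xz). QZ (snd xz)) \<theta> = SM * SXZ"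
    unfolding renyi_sum_def SM_def SXZ_def sum_product sum.cartesian_product UNIV_Times_UNIV
    by (rule sum.cong) (auto simp: powr_mult assms)
  moreover have "SM > 0"
    unfolding SM_def using assms by (intro sum_pos2[where i = m0]) auto
  moreover have "SXZ > 0"
    unfolding SXZ_def using assms by (intro sum_pos2[where i = xz0]) auto
  ultimately show ?thesis by (simp add: Ufun_def ln_mult)
qed

theorem mainTheorem8:
  fixes PXZ :: "'x::{ab_group_add, finite} \<times> 'z::finite \<Rightarrow> real"
    and PZ QZ :: "'z \<Rightarrow> real"
    and PM :: "'m::finite \<Rightarrow> real"
    and e :: "'m \<Rightarrow> 'x" and d :: "'x \<times> 'z \<Rightarrow> 'm"
  assumes PXZ_nonneg: "\<And>xz. PXZ xz \<ge> 0" and PXZ_sum: "(\<Sum>xz\<in>UNIV. PXZ xz) = 1"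
    and PZ_marg: "\<And>z. PZ z = (\<Sum>x\<in>UNIV. PXZ (x, z))"
    and PM_nonneg: "\<And>m. PM m \<ge> 0" and PM_sum: "(\<Sum>m\<in>UNIV. PM m) = 1"
    and QZ_nonneg: "\<And>z. QZ z \<ge> 0" and QZ_sum: "(\<Sum>z\<in>UNIV. QZ z) = 1"
    and QZ_pos: "\<And>z. PZ z > 0 \<Longrightarrow> QZ z > 0"
  defines "R \<equiv> ln (real CARD('x))"
    and "U \<equiv> Ufun PM PXZ QZ"
    and "P \<equiv> Pjs PM (Wch PXZ) e d"
  shows "Sup {ereal ((1 + s) / s) *
              (ereal (- U (\<rho> * (1 + s)) / (1 + s) + U \<rho>)
               + elog (1 - 2 * exp ((U (\<rho> - \<sigma> * (1 - \<rho>)) - (1 + \<sigma>) * U \<rho> + \<sigma> * R)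
                                    / (1 + \<sigma>))))
             | s \<rho> \<sigma>. s > 0 \<and> \<sigma> \<ge> 0} \<le> elog P
      \<and> (\<forall>\<theta>0. \<theta>0 < 1 \<and> (1 - \<theta>0) * deriv U \<theta>0 + U \<theta>0 = R \<longrightarrow>
         Sup {ereal ((1 + s) / s) *
              (ereal (- U (\<rho> * (1 + s)) / (1 + s) + U \<rho>)
               + elog (1 - 2 * exp ((\<rho> - \<theta>0) * deriv U \<theta>0 + U \<theta>0 - U \<rho>)))
             | s \<rho>. s > 0 \<and> \<theta>0 < \<rho> \<and> \<rho> < 1} \<le> elog P)"
proof -
  have QZ_snd_pos: "QZ (snd xz) > 0" if "PXZ xz > 0" for xz
    using QZ_pos PXZ_nonneg that unfolding PZ_marg
    by (metis prod.collapse sum_pos2 finite UNIV_I)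
  obtain m0 xz0 where "PM m0 > 0" "PXZ xz0 > 0"
    using PM_sum PXZ_sum PM_nonneg PXZ_nonneg
    by (metis less_eq_real_def sum_nonneg_eq_0_iff finite zero_neq_one UNIV_I)
  interpret dominated_weights "\<lambda>(m, xz). PM m * PXZ xz" "\<lambda>(m, xz). QZ (snd xz)"
  proof
    show "\<exists>w. (case w of (m, xz) \<Rightarrow> PM m * PXZ xz) > 0"
      using \<open>PM m0 > 0\<close> \<open>PXZ xz0 > 0\<close> by (intro exI[of _ "(m0, xz0)"]) simp
  qed (use PM_nonneg PXZ_nonneg QZ_nonneg QZ_snd_pos in
       \<open>auto split: prod.splits, metis less_eq_real_def mult_not_zero\<close>)
  have U_eq: "U \<theta> = ln (renyi_sum (\<lambda>(m, xz). PM m * PXZ xz) (\<lambda>(m, xz). QZ (snd xz)) \<theta>)" for \<theta>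
    unfolding U_def using PM_nonneg PXZ_nonneg QZ_nonneg \<open>PM m0 > 0\<close> \<open>PXZ xz0 > 0\<close>
      QZ_snd_pos[OF \<open>PXZ xz0 > 0\<close>]
    by (rule Ufun_eq_ln_renyi_sum)
  have success_mass: "(\<Sum>(m, xz)\<in>decoded_correctly e d. QZ (snd xz)) \<le> real CARD('x)"
    by (simp add: sum_decoded_correctly QZ_sum)
  have P_eq: "P = (\<Sum>(m, xz)\<in>-decoded_correctly e d. PM m * PXZ xz)"
    unfolding P_def by (rule Pjs_Wch_eq_sum_compl)
  have "real CARD('x) > 0" by simp
  note first_bound = Sup_error_exponent_le[OF U_eq R_def[THEN meta_eq_to_obj_eq] success_mass this,
      folded P_eq]
  show ?thesis
    using first_bound order.trans[OF Sup_error_exponent_reparametrised_le first_bound] by blast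
qed

end
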